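(* Let $k\ge1$, $G=(V,E)$ an inductively $k$-independent graph with $k$-independence ordering $v_1,\dots,v_n$, and $w:V\to\mathbb{Z}_{\ge0}$ vertex weights (write $w_i=w(v_i)$). Let $y$ and $S_{\mathrm{out}}$ be produced by the algorithm PD-MWIS described in the context. Then $w(S_{\mathrm{out}})=\sum_{v\in S_{\mathrm{out}}}w(v)\ge\sum_{i=1}^n y_i$.
   Context: $N(v)$ is the neighbourhood of $v$ (excluding $v$); $G$ is inductively $k$-independent with $k$-independence ordering $v_1,\dots,v_n$ if for every $i$, $G[N(v_i)\cap\{v_i,\dots,v_n\}]$ has no independent set of size more than $k$. Let $A_j=N(v_j)\cap\{v_{j+1},\dots,v_n\}$. Algorithm PD-MWIS: Phase 1: start with an empty stack $S$; for $i=1,\dots,n$: set $y_i=\max\{0,\ w_i-\sum_{j<i,\ v_i\in A_j}y_j\}$, and if $y_i>0$ push $v_i$ onto $S$. Phase 2: with $S_{\mathrm{out}}=\emptyset$, pop the vertices of $S$ one at a time (reverse insertion order), adding a popped $v$ to $S_{\mathrm{out}}$ whenever $S_{\mathrm{out}}\cap N(v)=\emptyset$. Output $S_{\mathrm{out}}$. *)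

theory Defs
  imports Main
begin

text \<open>Graphs: vertex type 'a, edge relation E (symmetric, irreflexive), vertex set = set of the
ordering list vs = [v_1,...,v_n] (0-based positions: vs!i is v_(i+1)).\<close>

definition simple_graph_on :: "'a list \<Rightarrow> ('a \<Rightarrow> 'a \<Rightarrow> bool) \<Rightarrow> bool" where
  "simple_graph_on vs E \<longleftrightarrow> distinct vs \<and> (\<forall>u v. E u v \<longrightarrow> E v u) \<and> (\<forall>u. \<not> E u u)
     \<and> (\<forall>u v. E u v \<longrightarrow> u \<in> set vs \<and> v \<in> set vs)"

definition independent_set :: "('a \<Rightarrow> 'a \<Rightarrow> bool) \<Rightarrow> 'a set \<Rightarrow> bool" where
  "independent_set E I \<longleftrightarrow> (\<forall>u\<in>I. \<forall>v\<in>I. \<not> E u v)"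

definition k_independence_ordering :: "('a \<Rightarrow> 'a \<Rightarrow> bool) \<Rightarrow> 'a list \<Rightarrow> nat \<Rightarrow> bool" where
  "k_independence_ordering E vs k \<longleftrightarrow>
     (\<forall>i < length vs. \<forall>I. I \<subseteq> {u. E (vs!i) u} \<inter> set (drop i vs) \<and> independent_set E I
        \<longrightarrow> card I \<le> k)"

text \<open>Phase 1: the dual values y_1..y_i as a list (0-based). v_i \<in> A_j with j < i iff E v_j v_i.\<close>
fun pd_ys :: "('a \<Rightarrow> 'a \<Rightarrow> bool) \<Rightarrow> ('a \<Rightarrow> int) \<Rightarrow> 'a list \<Rightarrow> nat \<Rightarrow> int list" where
  "pd_ys E w vs 0 = []"
| "pd_ys E w vs (Suc i) =
     (let ys = pd_ys E w vs i
      in ys @ [max 0 (w (vs!i) - (\<Sum>j | j < i \<and> E (vs!j) (vs!i). ys!j))])"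

definition pd_y :: "('a \<Rightarrow> 'a \<Rightarrow> bool) \<Rightarrow> ('a \<Rightarrow> int) \<Rightarrow> 'a list \<Rightarrow> nat \<Rightarrow> int" where
  "pd_y E w vs i = pd_ys E w vs (Suc i) ! i"

text \<open>The stack S after phase 1, listed in insertion order (bottom to top).\<close>
definition pd_stack :: "('a \<Rightarrow> 'a \<Rightarrow> bool) \<Rightarrow> ('a \<Rightarrow> int) \<Rightarrow> 'a list \<Rightarrow> 'a list" where
  "pd_stack E w vs = map (\<lambda>i. vs!i) (filter (\<lambda>i. pd_y E w vs i > 0) [0..<length vs])"

definition pd_out :: "('a \<Rightarrow> 'a \<Rightarrow> bool) \<Rightarrow> ('a \<Rightarrow> int) \<Rightarrow> 'a list \<Rightarrow> 'a set" where
  "pd_out E w vs = foldl (\<lambda>S v. if S \<inter> {u. E v u} = {} then insert v S else S) {}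
                      (rev (pd_stack E w vs))"

end

theory Submission
  imports Defs
begin

text \<open>Every vertex pushed in phase 1 (y_i > 0) has a tight dual constraint:
w_i = y_i + the sum of y_j over its earlier neighbours v_j. Phase 2 pops in decreasing index order,
so every pushed v_j is either output or has an output neighbour v_i with i > j; either way y_j
occurs in the tight sum of some output vertex. Since y >= 0, summing the tight equalities over
S_out bounds the sum of all y_i.\<close>

lemma sum_le_sum_over_cover:
  fixes f :: "'b \<Rightarrow> 'c::ordered_comm_monoid_add"
  assumes "finite I" "\<And>i. i \<in> I \<Longrightarrow> finite (C i)" "A \<subseteq> (\<Union>i\<in>I. C i)" "\<And>j. 0 \<le> f j"
  shows "sum f A \<le> (\<Sum>i\<in>I. sum f (C i))"
proof -
  have "A \<subseteq> snd ` Sigma I C"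
    using assms(3) by force
  then have "sum f A \<le> sum f (snd ` Sigma I C)"
    using assms by (intro sum_mono2) auto
  also have "\<dots> \<le> sum (f \<circ> snd) (Sigma I C)"
    by (rule sum_image_le) (use assms in auto)
  also have "\<dots> = (\<Sum>i\<in>I. sum f (C i))"
    using assms by (simp add: sum.Sigma split_def)
  finally show ?thesis .
qed

lemma length_pd_ys [simp]: "length (pd_ys E w vs m) = m"
  by (induction m) (simp_all add: Let_def)

lemma nth_pd_ys: "i < m \<Longrightarrow> pd_ys E w vs m ! i = pd_y E w vs i"
proof (induction m)
  case 0
  then show ?case by simp
next
  case (Suc m)
  then show ?case
    by (auto simp: Let_def nth_append pd_y_def less_Suc_eq)
qed

lemma pd_y_rec:
  "pd_y E w vs i = max 0 (w (vs!i) - (\<Sum>j | j < i \<and> E (vs!j) (vs!i). pd_y E w vs j))"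
proof -
  have "(\<Sum>j | j < i \<and> E (vs!j) (vs!i). pd_ys E w vs i ! j)
      = (\<Sum>j | j < i \<and> E (vs!j) (vs!i). pd_y E w vs j)"
    by (rule sum.cong) (simp_all add: nth_pd_ys)
  then show ?thesis
    by (simp add: pd_y_def Let_def nth_append)
qed

lemma pd_y_nonneg: "0 \<le> pd_y E w vs i"
  by (subst pd_y_rec) simp

lemma pd_y_pos_tight:
  assumes "0 < pd_y E w vs i"
  shows "w (vs!i) = (\<Sum>j \<in> insert i {j. j < i \<and> E (vs!j) (vs!i)}. pd_y E w vs j)"
proof -
  have "w (vs!i) = pd_y E w vs i + (\<Sum>j | j < i \<and> E (vs!j) (vs!i). pd_y E w vs j)"
    using assms pd_y_rec[of E w vs i] by linarith
  then show ?thesis by simp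
qed

definition greedy_step :: "('a \<Rightarrow> 'a \<Rightarrow> bool) \<Rightarrow> 'a set \<Rightarrow> 'a \<Rightarrow> 'a set" where
  "greedy_step E S v = (if S \<inter> {u. E v u} = {} then insert v S else S)"

definition greedy_indep :: "('a \<Rightarrow> 'a \<Rightarrow> bool) \<Rightarrow> 'a list \<Rightarrow> 'a set" where
  "greedy_indep E xs = foldl (greedy_step E) {} xs"

lemma greedy_indep_Nil [simp]: "greedy_indep E [] = {}"
  by (simp add: greedy_indep_def)

lemma greedy_indep_snoc [simp]:
  "greedy_indep E (xs @ [x]) = greedy_step E (greedy_indep E xs) x"
  by (simp add: greedy_indep_def)

lemma greedy_indep_map:
  "greedy_indep E (map g xs) = g ` greedy_indep (\<lambda>i j. E (g i) (g j)) xs"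
  by (induction xs rule: rev_induct) (auto simp: greedy_indep_def greedy_step_def)

lemma greedy_indep_subset: "greedy_indep E xs \<subseteq> set xs"
  by (induction xs rule: rev_induct) (auto simp: greedy_step_def)

lemma greedy_indep_dominates:
  assumes "sorted_wrt R xs" "v \<in> set xs"
  shows "v \<in> greedy_indep E xs \<or> (\<exists>u \<in> greedy_indep E xs. R u v \<and> E v u)"
  using assms
proof (induction xs arbitrary: v rule: rev_induct)
  case Nil
  then show ?case by simp
next
  case (snoc x xs)
  let ?S = "greedy_indep E xs"
  have grows: "?S \<subseteq> greedy_step E ?S x"
    by (auto simp: greedy_step_def)
  show ?case
  proof (cases "v \<in> set xs")
    case True
    with snoc show ?thesis
      using grows by (fastforce simp: sorted_wrt_append)
  next
    case False
    then have "v = x" using snoc.prems by simp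
    moreover have "R u x" if "u \<in> ?S" for u
      using that greedy_indep_subset snoc.prems(1) by (fastforce simp: sorted_wrt_append)
    ultimately show ?thesis
      using grows by (auto simp: greedy_step_def)
  qed
qed

lemma pd_out_kept_indices:
  obtains T where "T \<subseteq> {j. j < length vs \<and> 0 < pd_y E w vs j}"
    and "pd_out E w vs = (!) vs ` T"
    and "\<And>j. \<lbrakk>j < length vs; 0 < pd_y E w vs j\<rbrakk> \<Longrightarrow> j \<in> T \<or> (\<exists>i\<in>T. j < i \<and> E (vs!j) (vs!i))"
proof -
  define ps where "ps = rev (filter (\<lambda>i. 0 < pd_y E w vs i) [0..<length vs])"
  define T where "T = greedy_indep (\<lambda>i j. E (vs!i) (vs!j)) ps"
  have set_ps: "set ps = {j. j < length vs \<and> 0 < pd_y E w vs j}"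
    by (auto simp: ps_def)
  have sorted_ps: "sorted_wrt (>) ps"
    by (simp add: ps_def sorted_wrt_rev sorted_wrt_filter)
  have "pd_out E w vs = greedy_indep E (rev (pd_stack E w vs))"
    by (simp add: pd_out_def greedy_indep_def greedy_step_def[abs_def])
  then have "pd_out E w vs = (!) vs ` T"
    by (simp add: T_def ps_def pd_stack_def rev_map greedy_indep_map)
  moreover have "T \<subseteq> {j. j < length vs \<and> 0 < pd_y E w vs j}"
    unfolding T_def set_ps[symmetric] by (rule greedy_indep_subset)
  moreover have "j \<in> T \<or> (\<exists>i\<in>T. j < i \<and> E (vs!j) (vs!i))"
    if "j < length vs" "0 < pd_y E w vs j" for j
    unfolding T_def using sorted_ps by (rule greedy_indep_dominates) (simp add: set_ps that)
  ultimately show ?thesis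
    using that by blast
qed

theorem lemma11:
  fixes E :: "'a \<Rightarrow> 'a \<Rightarrow> bool" and vs :: "'a list" and w :: "'a \<Rightarrow> int" and k :: nat
  assumes "k \<ge> 1"
    and "simple_graph_on vs E"
    and "k_independence_ordering E vs k"
    and "\<forall>v \<in> set vs. w v \<ge> 0"
  shows "(\<Sum>v \<in> pd_out E w vs. w v) \<ge> (\<Sum>i < length vs. pd_y E w vs i)"
proof -
  define y where "y = pd_y E w vs"
  define C where "C i = insert i {j. j < i \<and> E (vs!j) (vs!i)}" for i
  obtain T where T_pos: "T \<subseteq> {j. j < length vs \<and> 0 < y j}"
    and out: "pd_out E w vs = (!) vs ` T"
    and covers: "\<And>j. \<lbrakk>j < length vs; 0 < y j\<rbrakk> \<Longrightarrow> j \<in> T \<or> (\<exists>i\<in>T. j < i \<and> E (vs!j) (vs!i))"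
    using pd_out_kept_indices[of vs E w, folded y_def] by blast
  have "finite T"
    using T_pos by (rule finite_subset) simp
  have "inj_on ((!) vs) T"
    using assms(2) T_pos by (intro inj_on_nth) (auto simp: simple_graph_on_def)
  have "(\<Sum>i < length vs. y i) = sum y {j. j < length vs \<and> 0 < y j}"
    by (rule sum.mono_neutral_right) (auto simp: y_def order_less_le pd_y_nonneg)
  also have "\<dots> \<le> (\<Sum>i\<in>T. sum y (C i))"
  proof (rule sum_le_sum_over_cover)
    show "{j. j < length vs \<and> 0 < y j} \<subseteq> (\<Union>i\<in>T. C i)"
      using covers by (fastforce simp: C_def)
  qed (simp_all add: \<open>finite T\<close> C_def y_def pd_y_nonneg)
  also have "\<dots> = (\<Sum>i\<in>T. w (vs!i))"
    using T_pos by (intro sum.cong) (auto simp: C_def y_def pd_y_pos_tight)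
  also have "\<dots> = (\<Sum>v \<in> pd_out E w vs. w v)"
    by (simp add: out sum.reindex \<open>inj_on ((!) vs) T\<close>)
  finally show ?thesis
    by (simp add: y_def)
qed

end
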